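(* Let $\Theta$ be a finite simple oriented graph with simple cycles $C_1,\ldots,C_k$ ($k\geq 1$) which contains no two different cycles connected by an oriented path, and fix on the free monoid $F$ on $V(\Theta)$ the deg-lex order induced by a vertex order as described in the context. Let $u,v,w\in F$ with $\operatorname{supp}(u),\operatorname{supp}(w)\subseteq V(C_n)$ for some cycle $C_n$, and suppose every word in the family $u^*vw^*=\{u^avw^b: a,b\geq 0\}$ is reduced. Then either $v$ contains a vertex connected by an edge with $C_n$, or this family of words can be expressed as a finite union of sets of the form $pr^*q=\{pr^cq:c\geq0\}$ or $\{p\}$, for some words $p,q,r\in F$.
   Context: $\mathrm{HK}_\Theta$: generated by vertices $x$ with $x^2=x$; $xy=yx$ if $x,y$ not joined by an edge; $xyx=yxy=xy$ if $x\to y$. The support $\operatorname{supp}(w)$ is the set of letters occurring in $w$. Maximal cycle-reachable subgraph $\Theta'$: full subgraph on all cycle vertices and all vertices joined to some cycle by an oriented path. For a non-cycle vertex $x$ of $\Theta'$, all oriented paths between $x$ and cycles go in the same direction; $k_x$ is the number of oriented paths of length $\geq0$ in $\Theta$ ending at $x$ (if paths go from $x$ into cycles) or beginning at $x$ (if paths go from cycles to $x$). Vertex order: write $C_j$ as $x_{1,j}\to\cdots\to x_{n(j),j}\to x_{1,j}$; on cycle vertices $x_{i,j}<x_{l,m}$ iff $j<m$, or $j=m$ and $i<l$; all cycle vertices are smaller than all non-cycle vertices; on non-cycle vertices of $\Theta'$ any order with $k_x<k_y\Rightarrow y<x$; vertices outside $\Theta'$ ordered arbitrarily (e.g. larger than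 those of $\Theta'$). Reduced word: with $w\nrightarrow t$ meaning $t\notin\operatorname{supp}(w)$ and no $x\in\operatorname{supp}(w)$ has $x\to t$, $t\nrightarrow w$ meaning $t\notin\operatorname{supp}(w)$ and no $y\in\operatorname{supp}(w)$ has $t\to y$, and $t\nleftrightarrow w$ meaning both, a word is reduced if it has no factor $twt$ with $w\nrightarrow t$ or with $t\nrightarrow w$, and no factor $t_1wt_2$ with $t_1>t_2$ and $t_2\nleftrightarrow t_1w$. *)

theory Defs
  imports Main
begin

definition oriented_simple_graph :: "'v set \<Rightarrow> ('v \<Rightarrow> 'v \<Rightarrow> bool) \<Rightarrow> bool" where
  "oriented_simple_graph V E \<longleftrightarrow> finite V \<and> (\<forall>x y. E x y \<longrightarrow> x \<in> V \<and> y \<in> V)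
     \<and> (\<forall>x. \<not> E x x) \<and> (\<forall>x y. E x y \<longrightarrow> \<not> E y x)"

definition simple_cycle :: "'v set \<Rightarrow> ('v \<Rightarrow> 'v \<Rightarrow> bool) \<Rightarrow> 'v list \<Rightarrow> bool" where
  "simple_cycle V E c \<longleftrightarrow> c \<noteq> [] \<and> distinct c \<and> set c \<subseteq> V \<and> successively E c \<and> E (last c) (hd c)"

definition oriented_path :: "'v set \<Rightarrow> ('v \<Rightarrow> 'v \<Rightarrow> bool) \<Rightarrow> 'v list \<Rightarrow> bool" where
  "oriented_path V E p \<longleftrightarrow> p \<noteq> [] \<and> distinct p \<and> set p \<subseteq> V \<and> successively E p"

definition cycle_vertices :: "nat \<Rightarrow> (nat \<Rightarrow> 'v list) \<Rightarrow> 'v set" where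
  "cycle_vertices k cyc = (\<Union>j<k. set (cyc j))"

definition theta' :: "'v set \<Rightarrow> ('v \<Rightarrow> 'v \<Rightarrow> bool) \<Rightarrow> nat \<Rightarrow> (nat \<Rightarrow> 'v list) \<Rightarrow> 'v set" where
  "theta' V E k cyc = {x \<in> V. \<exists>c \<in> cycle_vertices k cyc. E\<^sup>*\<^sup>* x c \<or> E\<^sup>*\<^sup>* c x}"

definition kval :: "'v set \<Rightarrow> ('v \<Rightarrow> 'v \<Rightarrow> bool) \<Rightarrow> nat \<Rightarrow> (nat \<Rightarrow> 'v list) \<Rightarrow> 'v \<Rightarrow> nat" where
  "kval V E k cyc x =
     (if \<exists>c \<in> cycle_vertices k cyc. E\<^sup>*\<^sup>* x c
      then card {p. oriented_path V E p \<and> last p = x}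
      else card {p. oriented_path V E p \<and> hd p = x})"

definition admissible_order ::
  "'v set \<Rightarrow> ('v \<Rightarrow> 'v \<Rightarrow> bool) \<Rightarrow> nat \<Rightarrow> (nat \<Rightarrow> 'v list) \<Rightarrow> ('v \<Rightarrow> 'v \<Rightarrow> bool) \<Rightarrow> bool" where
  "admissible_order V E k cyc lt \<longleftrightarrow>
     (\<forall>x\<in>V. \<not> lt x x) \<and>
     (\<forall>x\<in>V. \<forall>y\<in>V. \<forall>z\<in>V. lt x y \<longrightarrow> lt y z \<longrightarrow> lt x z) \<and>
     (\<forall>x\<in>V. \<forall>y\<in>V. x \<noteq> y \<longrightarrow> lt x y \<or> lt y x) \<and>
     (\<forall>i<k. \<forall>j<k. \<forall>a<length (cyc i). \<forall>b<length (cyc j).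
        lt (cyc i ! a) (cyc j ! b) \<longleftrightarrow> (i < j \<or> (i = j \<and> a < b))) \<and>
     (\<forall>x \<in> cycle_vertices k cyc. \<forall>y \<in> V - cycle_vertices k cyc. lt x y) \<and>
     (\<forall>x \<in> theta' V E k cyc - cycle_vertices k cyc. \<forall>y \<in> theta' V E k cyc - cycle_vertices k cyc.
        kval V E k cyc x < kval V E k cyc y \<longrightarrow> lt y x)"

definition no_arrow_to :: "('v \<Rightarrow> 'v \<Rightarrow> bool) \<Rightarrow> 'v list \<Rightarrow> 'v \<Rightarrow> bool" where
  "no_arrow_to E w t \<longleftrightarrow> t \<notin> set w \<and> (\<forall>x \<in> set w. \<not> E x t)"

definition no_arrow_from :: "('v \<Rightarrow> 'v \<Rightarrow> bool) \<Rightarrow> 'v \<Rightarrow> 'v list \<Rightarrow> bool" where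
  "no_arrow_from E t w \<longleftrightarrow> t \<notin> set w \<and> (\<forall>y \<in> set w. \<not> E t y)"

definition reduced :: "('v \<Rightarrow> 'v \<Rightarrow> bool) \<Rightarrow> ('v \<Rightarrow> 'v \<Rightarrow> bool) \<Rightarrow> 'v list \<Rightarrow> bool" where
  "reduced E lt s \<longleftrightarrow>
     \<not> (\<exists>a t w b. s = a @ [t] @ w @ [t] @ b \<and> (no_arrow_to E w t \<or> no_arrow_from E t w)) \<and>
     \<not> (\<exists>a t1 w t2 b. s = a @ [t1] @ w @ [t2] @ b \<and> lt t2 t1 \<and>
          no_arrow_from E t2 (t1 # w) \<and> no_arrow_to E (t1 # w) t2)"

definition word_pow :: "'v list \<Rightarrow> nat \<Rightarrow> 'v list" where
  "word_pow u a = concat (replicate a u)"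

end

theory Submission
  imports Defs
begin

(*
Assume no letter of v is adjacent to C_n; then no letter of v lies on C_n either. If u, v and w
were all nonempty, the factors (last u)(hd v) and (hd v)...(hd w) of u v w, whose outer letters
commute with everything between them, would force last u < hd v and not hd w < hd v; but in an
admissible order a vertex outside C_n that lies above one vertex of C_n lies above all of them.
So u, w or v is empty, and only v = [] needs an argument.

No other cycle meets C_n, so C_n is chordless: inside C_n every vertex has exactly one in- and one
out-neighbour. Hence in a reduced word over C_n the letters of an edge z -> y alternate, since two
equal letters z (or y) must be separated by an arrow out of z (into y), i.e. by the other letter.
Applied to u u this shows that all vertices of C_n occur equally often in u, say N_u times, and
likewise N_w times in w. The words u^N_w and w^N_u then have the same letter counts, and since
u^N_w u^N_w and u^N_w w^N_u are reduced they have the same projection onto every edge. A reduced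
word is determined by these projections (the first letters of two such words could otherwise be
compared by the second reduction rule), so u^N_w = w^N_u and the family is the union of the
families u^* w^r, r < N_u.
*)

section \<open>Powers and projections of words\<close>

lemma word_pow_0 [simp]: "word_pow u 0 = []"
  by (simp add: word_pow_def)

lemma word_pow_Suc [simp]: "word_pow u (Suc a) = u @ word_pow u a"
  by (simp add: word_pow_def)

lemma word_pow_Nil [simp]: "word_pow [] a = []"
  by (simp add: word_pow_def)

lemma word_pow_add: "word_pow u (a + b) = word_pow u a @ word_pow u b"
  by (simp add: word_pow_def replicate_add)

lemma word_pow_mult: "word_pow u (a * b) = word_pow (word_pow u a) b"
  by (induction b) (simp_all add: word_pow_add)

lemma set_word_pow: "set (word_pow u a) \<subseteq> set u"
  by (auto simp: word_pow_def)

lemma count_list_word_pow: "count_list (word_pow u a) x = a * count_list u x"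
  by (induction a) simp_all

lemma count_list_filter: "P x \<Longrightarrow> count_list (filter P xs) x = count_list xs x"
  by (induction xs) auto

lemma word_pow_double_star_eq:
  assumes "0 < q" and "word_pow w q = word_pow u p"
  shows "{word_pow u a @ word_pow w b | a b. True} = (\<Union>r<q. {word_pow u c @ word_pow w r | c. True})"
proof (intro equalityI subsetI)
  fix x
  assume "x \<in> {word_pow u a @ word_pow w b | a b. True}"
  then obtain a b where x: "x = word_pow u a @ word_pow w b"
    by blast
  have "word_pow w b = word_pow w (q * (b div q)) @ word_pow w (b mod q)"
    by (simp flip: word_pow_add)
  also have "word_pow w (q * (b div q)) = word_pow u (p * (b div q))"
    by (simp add: word_pow_mult assms(2))
  finally have "x = word_pow u (a + p * (b div q)) @ word_pow w (b mod q)"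
    using x by (simp add: word_pow_add)
  moreover have "b mod q < q"
    using assms(1) by simp
  ultimately show "x \<in> (\<Union>r<q. {word_pow u c @ word_pow w r | c. True})"
    by blast
qed auto

lemma double_star_finite_union:
  assumes "u = [] \<or> w = [] \<or> v = [] \<and> (\<exists>p q. 0 < q \<and> word_pow w q = word_pow u p)"
  shows "\<exists>S. finite S \<and> (\<forall>(p, r, q) \<in> S. set p \<union> set r \<union> set q \<subseteq> set u \<union> set v \<union> set w) \<and>
    {word_pow u a @ v @ word_pow w b | a b. True} = (\<Union>(p, r, q) \<in> S. {p @ word_pow r c @ q | c. True})"
proof -
  consider "u = []" | "w = []" | p q where "v = []" "0 < q" "word_pow w q = word_pow u p"
    using assms by blast
  then show ?thesis
  proof cases
    case 1
    then show ?thesis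
      by (intro exI[of _ "{(v, w, [])}"]) auto
  next
    case 2
    then show ?thesis
      by (intro exI[of _ "{([], u, v)}"]) auto
  next
    case 3
    let ?S = "(\<lambda>r. ([], u, word_pow w r)) ` {..<q}"
    have "{word_pow u a @ v @ word_pow w b | a b. True} =
        (\<Union>(p, r, q) \<in> ?S. {p @ word_pow r c @ q | c. True})"
      using word_pow_double_star_eq[OF 3(2,3)] 3(1) by auto
    moreover have "\<forall>(p, r, q) \<in> ?S. set p \<union> set r \<union> set q \<subseteq> set u \<union> set v \<union> set w"
      using set_word_pow by fastforce
    ultimately show ?thesis
      by (intro exI[of _ ?S]) auto
  qed
qed

lemma successively_eq_imp_eq_hd:
  "successively (\<lambda>a b. f a = f b) xs \<Longrightarrow> x \<in> set xs \<Longrightarrow> f x = f (hd xs)"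
  by (induction xs rule: induct_list012) auto

abbreviation proj :: "'a set \<Rightarrow> 'a list \<Rightarrow> 'a list" where
  "proj A \<equiv> filter (\<lambda>c. c \<in> A)"

lemma length_proj_pair: "z \<noteq> y \<Longrightarrow> length (proj {z, y} s) = count_list s z + count_list s y"
  by (induction s) auto

lemma proj_eq_if_count_list_eq:
  assumes "\<And>x. count_list s x = count_list s' x" and "y \<in> A" "A \<inter> (set s \<union> set s') \<subseteq> {y}"
  shows "proj A s = proj A s'"
proof -
  have "proj A t = replicate (count_list t y) y" if "A \<inter> set t \<subseteq> {y}" for t
    using that \<open>y \<in> A\<close> by (induction t) auto
  with assms show ?thesis
    by (metis Int_Un_distrib le_sup_iff)
qed

lemma filter_not_successively_neq:
  "\<not> successively (\<noteq>) (filter P s) \<Longrightarrow>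
   \<exists>a t m b. P t \<and> s = a @ t # m @ t # b \<and> (\<forall>q\<in>set m. \<not> P q)"
proof (induction s)
  case (Cons c s)
  show ?case
  proof (cases "P c \<and> successively (\<noteq>) (filter P s)")
    case True
    with Cons.prems have "filter P s = c # tl (filter P s)"
      by (cases "filter P s") auto
    from filter_eq_ConsD[OF this] obtain m b where "s = m @ c # b" "\<forall>q\<in>set m. \<not> P q"
      by blast
    with True have "P c \<and> c # s = [] @ c # m @ c # b \<and> (\<forall>q\<in>set m. \<not> P q)"
      by simp
    then show ?thesis
      by blast
  next
    case False
    with Cons.prems have "\<not> successively (\<noteq>) (filter P s)"
      by (auto split: if_splits)
    then obtain a t m b where "P t \<and> s = a @ t # m @ t # b \<and> (\<forall>q\<in>set m. \<not> P q)"
      using Cons.IH by blast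
    then have "P t \<and> c # s = (c # a) @ t # m @ t # b \<and> (\<forall>q\<in>set m. \<not> P q)"
      by simp
    then show ?thesis
      by blast
  qed
qed simp

lemma count_list_alternating:
  assumes "successively (\<noteq>) (xs @ xs)" and "set xs \<subseteq> {a, b}"
  shows "count_list xs a = count_list xs b"
proof -
  have "count_list ys a = count_list ys b"
    if "successively (\<noteq>) ys" "set ys \<subseteq> {a, b}" "last ys \<noteq> hd ys" for ys
    using that
  proof (induction ys rule: induct_list012)
    case (3 x y zs)
    then have xy: "x \<noteq> y" "x \<in> {a, b}" "y \<in> {a, b}"
      by simp_all
    then have "count_list [x, y] a = count_list [x, y] b"
      by auto
    moreover have "count_list zs a = count_list zs b"
    proof (cases zs)
      case (Cons z zs')
      with "3.prems" have "z \<noteq> y" "z \<in> {a, b}"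
        by auto
      with xy have "hd zs = x"
        using Cons by auto
      with "3.prems" Cons show ?thesis
        by (intro "3.IH"(1)) (auto split: if_splits)
    qed simp
    ultimately show ?case
      using count_list_append[of "[x, y]" zs] by simp
  qed simp_all
  with assms show ?thesis
    by (cases "xs = []") (auto simp: successively_append_iff)
qed

lemma alternating_eq:
  assumes "successively (\<noteq>) xs" "successively (\<noteq>) ys" "set xs \<union> set ys \<subseteq> {a, b}"
    and "length xs = length ys" "hd xs = hd ys"
  shows "xs = ys"
  using assms
proof (induction xs arbitrary: ys)
  case (Cons x xs)
  then obtain ys' where ys: "ys = x # ys'"
    by (cases ys) auto
  have "xs = ys'"
  proof (cases "xs = []")
    case False
    moreover from False Cons.prems(4) ys have "ys' \<noteq> []"
      by auto
    ultimately have "hd xs \<in> {a, b}" "hd ys' \<in> {a, b}"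
      using Cons.prems(3) ys hd_in_set by fastforce+
    moreover from False \<open>ys' \<noteq> []\<close> Cons.prems ys have "hd xs \<noteq> x" "hd ys' \<noteq> x" "x \<in> {a, b}"
      by (auto simp: successively_Cons)
    ultimately have "hd xs = hd ys'"
      by auto
    with Cons.prems ys show ?thesis
      by (intro Cons.IH) (auto simp: successively_Cons)
  qed (use Cons.prems ys in simp)
  with ys show ?case
    by simp
qed simp

lemma alternating_append_eq:
  assumes "successively (\<noteq>) (xs @ xs)" "successively (\<noteq>) (xs @ ys)"
    and "set xs \<union> set ys \<subseteq> {a, b}" and "length xs = length ys"
  shows "xs = ys"
proof (cases "xs = []")
  case False
  with assms(4) have "ys \<noteq> []"
    by auto
  with False assms(1,2) have "last xs \<noteq> hd xs" "last xs \<noteq> hd ys"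
    by (auto simp: successively_append_iff)
  moreover have "last xs \<in> {a, b}" "hd xs \<in> {a, b}" "hd ys \<in> {a, b}"
    using False \<open>ys \<noteq> []\<close> assms(3) last_in_set hd_in_set by blast+
  ultimately have "hd xs = hd ys"
    by auto
  with assms show ?thesis
    by (intro alternating_eq[of xs ys a b]) (auto simp: successively_append_iff)
qed (use assms(4) in simp)

section \<open>Reduced words\<close>

lemma reduced_appendD:
  assumes "reduced E lt (p @ s)"
  shows "reduced E lt s"
  unfolding reduced_def
proof (intro conjI notI; elim exE conjE)
  fix a t w b
  assume "s = a @ [t] @ w @ [t] @ b" "no_arrow_to E w t \<or> no_arrow_from E t w"
  then have "p @ s = (p @ a) @ [t] @ w @ [t] @ b \<and> (no_arrow_to E w t \<or> no_arrow_from E t w)"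
    by simp
  with assms show False
    unfolding reduced_def by blast
next
  fix a t1 w t2 b
  assume "s = a @ [t1] @ w @ [t2] @ b" "lt t2 t1" "no_arrow_from E t2 (t1 # w)" "no_arrow_to E (t1 # w) t2"
  then have "p @ s = (p @ a) @ [t1] @ w @ [t2] @ b \<and> lt t2 t1 \<and>
      no_arrow_from E t2 (t1 # w) \<and> no_arrow_to E (t1 # w) t2"
    by simp
  with assms show False
    unfolding reduced_def by blast
qed

lemma reduced_not_less:
  assumes "reduced E lt (a @ t1 # m @ t2 # b)"
    and "t2 \<notin> set (t1 # m)" and "\<forall>x\<in>set (t1 # m). \<not> E x t2 \<and> \<not> E t2 x"
  shows "\<not> lt t2 t1"
proof
  assume "lt t2 t1"
  with assms(2,3) have "a @ t1 # m @ t2 # b = a @ [t1] @ m @ [t2] @ b \<and> lt t2 t1 \<and>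
      no_arrow_from E t2 (t1 # m) \<and> no_arrow_to E (t1 # m) t2"
    by (simp add: no_arrow_from_def no_arrow_to_def)
  with assms(1) show False
    unfolding reduced_def by blast
qed

lemma reduced_repeat_has_arrows:
  assumes "reduced E lt (a @ t # m @ t # b)"
  shows "\<not> no_arrow_to E m t \<and> \<not> no_arrow_from E t m"
proof (rule ccontr)
  assume "\<not> ?thesis"
  then have "a @ t # m @ t # b = a @ [t] @ m @ [t] @ b \<and> (no_arrow_to E m t \<or> no_arrow_from E t m)"
    by simp
  with assms show False
    unfolding reduced_def by blast
qed

lemma reduced_proj_alternates:
  assumes red: "reduced E lt s" and "z \<noteq> y"
    and out: "\<forall>q\<in>set s. E z q \<longrightarrow> q = y" and inn: "\<forall>q\<in>set s. E q y \<longrightarrow> q = z"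
  shows "successively (\<noteq>) (proj {z, y} s)"
proof (rule ccontr)
  assume "\<not> ?thesis"
  then obtain a t m b where t: "t \<in> {z, y}" and s: "s = a @ t # m @ t # b"
    and m: "\<forall>q\<in>set m. q \<notin> {z, y}"
    using filter_not_successively_neq[of "\<lambda>c. c \<in> {z, y}" s] by blast
  from red s have "\<not> no_arrow_to E m t \<and> \<not> no_arrow_from E t m"
    using reduced_repeat_has_arrows[of E lt a t m b] by simp
  with t m obtain q where q: "q \<in> set m" "E t q \<and> t = z \<or> E q t \<and> t = y"
    unfolding no_arrow_to_def no_arrow_from_def by blast
  with out inn s have "q \<in> {z, y}"
    by auto
  with m q(1) show False
    by blast
qed

lemma reduced_heads_not_less:
  assumes red: "reduced E lt (x # s)" and "y \<noteq> x"
    and proj_eq: "\<And>z. z = y \<or> E z y \<or> E y z \<Longrightarrow> proj {z, y} (x # s) = proj {z, y} (y # s')"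
  shows "\<not> lt y x"
proof -
  from proj_eq[of y] \<open>y \<noteq> x\<close> have "y \<in> set (proj {y} s)"
    by simp
  then obtain m b where s: "s = m @ y # b" and "y \<notin> set m"
    by (meson filter_is_subset split_list_first subsetD)
  have "\<not> (E z y \<or> E y z)" if z: "z \<in> set (x # m)" for z
  proof
    assume adj: "E z y \<or> E y z"
    let ?p = "proj {z, y} (x # m)"
    have "y \<notin> set (x # m)"
      using \<open>y \<notin> set m\<close> \<open>y \<noteq> x\<close> by simp
    then have "set ?p \<subseteq> {z}"
      by auto
    moreover from z have "?p \<noteq> []"
      by (simp add: filter_empty_conv) blast
    ultimately have "hd ?p = z"
      using hd_in_set[of ?p] by blast
    moreover have "hd (proj {z, y} (x # s)) = hd ?p"
      using s \<open>?p \<noteq> []\<close> by (metis append_Cons filter_append hd_append2)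
    ultimately show False
      using proj_eq[of z] adj z \<open>y \<notin> set (x # m)\<close> by auto
  qed
  with red s \<open>y \<noteq> x\<close> \<open>y \<notin> set m\<close> show ?thesis
    using reduced_not_less[of E lt "[]" x m y b] by auto
qed

lemma reduced_heads_eq:
  assumes red: "reduced E lt (x # s)" "reduced E lt (y # s')"
    and tot: "totalp_on V lt" "x \<in> V" "y \<in> V"
    and proj_eq: "\<And>a b. a = b \<or> E a b \<Longrightarrow> proj {a, b} (x # s) = proj {a, b} (y # s')"
  shows "x = y"
proof (rule ccontr)
  assume "x \<noteq> y"
  have proj_sym: "proj {a, b} (x # s) = proj {a, b} (y # s')" if "a = b \<or> E a b \<or> E b a" for a b
  proof -
    from that consider "a = b \<or> E a b" | "E b a"
      by blast
    then show ?thesis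
    proof cases
      case 2
      with proj_eq[of b a] show ?thesis
        by (simp add: insert_commute)
    qed (rule proj_eq)
  qed
  have "\<not> lt y x"
  proof (rule reduced_heads_not_less[OF red(1)])
    show "y \<noteq> x"
      using \<open>x \<noteq> y\<close> by simp
    show "proj {z, y} (x # s) = proj {z, y} (y # s')" if "z = y \<or> E z y \<or> E y z" for z
      using proj_sym[OF that] .
  qed
  moreover have "\<not> lt x y"
  proof (rule reduced_heads_not_less[OF red(2)])
    show "x \<noteq> y"
      using \<open>x \<noteq> y\<close> .
    show "proj {z, x} (y # s') = proj {z, x} (x # s)" if "z = x \<or> E z x \<or> E x z" for z
      using proj_sym[OF that] by simp
  qed
  ultimately show False
    using totalp_onD[OF tot] \<open>x \<noteq> y\<close> by blast
qed

lemma reduced_eqI: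
  assumes "reduced E lt s" "reduced E lt s'" and "totalp_on V lt" and "set s \<subseteq> V" "set s' \<subseteq> V"
    and "\<And>z y. z = y \<or> E z y \<Longrightarrow> proj {z, y} s = proj {z, y} s'"
  shows "s = s'"
  using assms(1,2,4-6)
proof (induction s arbitrary: s')
  case Nil
  from Nil.prems(5)[of "hd s'" "hd s'"] show ?case
    by (cases s') auto
next
  case (Cons x s)
  from Cons.prems(5)[of x x] obtain y s'' where s': "s' = y # s''"
    by (cases s') auto
  have "x = y"
  proof (rule reduced_heads_eq[of E lt x s y s'' V])
    show "reduced E lt (x # s)" "reduced E lt (y # s'')"
      using Cons.prems(1,2) s' by simp_all
    show "totalp_on V lt" "x \<in> V" "y \<in> V"
      using assms(3) Cons.prems(3,4) s' by simp_all
    show "proj {a, b} (x # s) = proj {a, b} (y # s'')" if "a = b \<or> E a b" for a b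
      using Cons.prems(5)[OF that] s' by simp
  qed
  moreover have "s = s''"
  proof (rule Cons.IH)
    show "reduced E lt s" "reduced E lt s''"
      using reduced_appendD[of E lt "[x]" s] reduced_appendD[of E lt "[y]" s''] Cons.prems(1,2) s'
      by simp_all
    show "set s \<subseteq> V" "set s'' \<subseteq> V"
      using Cons.prems(3,4) s' by auto
    show "proj {z, w} s = proj {z, w} s''" if "z = w \<or> E z w" for z w
      using Cons.prems(5)[OF that] s' \<open>x = y\<close> by (simp split: if_splits)
  qed
  ultimately show ?case
    using s' by simp
qed

section \<open>Chordless cycles\<close>

lemma simple_cycle_rotate1:
  assumes "simple_cycle V E c"
  shows "simple_cycle V E (rotate1 c)"
proof (cases c)
  case (Cons x xs)
  have "successively E (x # xs)" "E (last (x # xs)) x"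
    using assms Cons by (simp_all add: simple_cycle_def)
  then have "successively E xs" "xs \<noteq> [] \<Longrightarrow> E (last xs) x" "E x (hd (xs @ [x]))"
    by (auto simp: successively_Cons hd_append split: if_splits)
  then have "successively E (xs @ [x])"
    by (auto simp: successively_append_iff)
  with assms Cons \<open>E x (hd (xs @ [x]))\<close> show ?thesis
    by (simp add: simple_cycle_def)
qed (use assms in \<open>simp add: simple_cycle_def\<close>)

lemma simple_cycle_rotate: "simple_cycle V E c \<Longrightarrow> simple_cycle V E (rotate m c)"
  by (induction m) (simp_all add: simple_cycle_rotate1)

lemma simple_cycle_out_neighbour:
  assumes "simple_cycle V E c" and "x \<in> set c"
  shows "\<exists>y\<in>set c. E x y"
proof -
  obtain ys zs where c: "c = ys @ x # zs"
    using assms(2) split_list by metis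
  show ?thesis
  proof (cases zs)
    case Nil
    with assms(1) c have "E x (hd c)"
      by (simp add: simple_cycle_def)
    moreover have "hd c \<in> set c"
      using hd_in_set[of c] c by simp
    ultimately show ?thesis ..
  next
    case (Cons y zs')
    with assms(1) c show ?thesis
      by (auto simp: simple_cycle_def successively_append_iff)
  qed
qed

(* For a simple cycle, admitting no simple cycle on a proper subset of its vertices is the same
   as having no chord. *)
definition chordless_cycle :: "'v set \<Rightarrow> ('v \<Rightarrow> 'v \<Rightarrow> bool) \<Rightarrow> 'v list \<Rightarrow> bool" where
  "chordless_cycle V E c \<longleftrightarrow>
     simple_cycle V E c \<and> (\<forall>c'. simple_cycle V E c' \<longrightarrow> set c' \<subseteq> set c \<longrightarrow> set c' = set c)"

lemma chordless_cycle_rotate: "chordless_cycle V E c \<Longrightarrow> chordless_cycle V E (rotate m c)"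
  by (simp add: chordless_cycle_def simple_cycle_rotate)

lemma ex_rotate_hd_eq:
  assumes "x \<in> set c"
  shows "\<exists>m. hd (rotate m c) = x"
proof -
  from assms obtain i where i: "i < length c" "c ! i = x"
    by (meson in_set_conv_nth)
  then have "c \<noteq> []"
    by auto
  with i have "hd (rotate i c) = x"
    by (simp add: hd_rotate_conv_nth)
  then show ?thesis ..
qed

lemma chordless_cycle_in_neighbour_last:
  assumes cyc: "chordless_cycle V E c" and x: "x \<in> set c" "E x (hd c)"
  shows "x = last c"
proof -
  from x(1) obtain p where p: "p < length c" "c ! p = x"
    by (meson in_set_conv_nth)
  let ?c' = "take (Suc p) c"
  have simple: "simple_cycle V E c"
    using cyc by (simp add: chordless_cycle_def)
  have "successively E ?c'"
    using simple successively_append_iff[of E ?c' "drop (Suc p) c"]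
    by (simp add: simple_cycle_def)
  moreover have "last ?c' = x"
    using p by (simp add: take_Suc_conv_app_nth)
  ultimately have "simple_cycle V E ?c'"
    using simple x(2) by (auto simp: simple_cycle_def dest: in_set_takeD)
  with cyc have "set ?c' = set c"
    by (simp add: chordless_cycle_def set_take_subset)
  then have "length ?c' = length c"
    using simple distinct_card[of ?c'] distinct_card[of c] by (simp add: simple_cycle_def)
  with p have "p = length c - 1" "c \<noteq> []"
    by auto
  with p show ?thesis
    by (simp add: last_conv_nth)
qed

lemma chordless_cycle_out_neighbour_second:
  assumes cyc: "chordless_cycle V E c" and "irreflp E" and y: "y \<in> set c" "E (hd c) y"
  shows "y = hd (tl c)"
proof -
  have simple: "simple_cycle V E c"
    using cyc by (simp add: chordless_cycle_def)
  then obtain h t where c: "c = h # t"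
    by (cases c) (auto simp: simple_cycle_def)
  with y \<open>irreflp E\<close> have "y \<in> set t"
    by (auto simp: irreflp_def)
  then obtain q where q: "q < length t" "t ! q = y"
    by (meson in_set_conv_nth)
  then have "t \<noteq> []"
    by auto
  let ?c' = "h # drop q t"
  have "successively E (h # t)"
    using simple c by (simp add: simple_cycle_def)
  then have "successively E t"
    by (auto simp: successively_Cons)
  then have "successively E (drop q t)"
    using successively_append_iff[of E "take q t" "drop q t"] by simp
  moreover have "hd (drop q t) = y" "last (drop q t) = last c"
    using q c \<open>t \<noteq> []\<close> by (simp_all add: hd_drop_conv_nth)
  ultimately have "simple_cycle V E ?c'"
    using simple c y(2) q by (auto simp: simple_cycle_def successively_Cons dest: in_set_dropD)
  moreover have "set ?c' \<subseteq> set c"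
    using c by (auto dest: in_set_dropD)
  ultimately have "set ?c' = set c"
    using cyc unfolding chordless_cycle_def by blast
  then have "length ?c' = length c"
    using simple \<open>simple_cycle V E ?c'\<close> distinct_card[of ?c'] distinct_card[of c]
    by (simp add: simple_cycle_def)
  with q c have "q = 0"
    by simp
  with q c \<open>t \<noteq> []\<close> show ?thesis
    by (simp add: hd_conv_nth)
qed

lemma chordless_cycle_in_neighbour_unique:
  assumes "chordless_cycle V E c" and "x \<in> set c" "x' \<in> set c" "y \<in> set c" and "E x y" "E x' y"
  shows "x = x'"
proof -
  obtain m where m: "hd (rotate m c) = y"
    using ex_rotate_hd_eq[OF assms(4)] ..
  have "z = last (rotate m c)" if "z \<in> set c" "E z y" for z
    using chordless_cycle_in_neighbour_last[OF chordless_cycle_rotate[OF assms(1)]] that m by simp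
  from this[of x] this[of x'] assms show ?thesis
    by simp
qed

lemma chordless_cycle_out_neighbour_unique:
  assumes "chordless_cycle V E c" "irreflp E" and "x \<in> set c" "y \<in> set c" "y' \<in> set c"
    and "E x y" "E x y'"
  shows "y = y'"
proof -
  obtain m where m: "hd (rotate m c) = x"
    using ex_rotate_hd_eq[OF assms(3)] ..
  have "z = hd (tl (rotate m c))" if "z \<in> set c" "E x z" for z
    using chordless_cycle_out_neighbour_second[OF chordless_cycle_rotate[OF assms(1)] assms(2)] that m
    by simp
  from this[of y] this[of y'] assms show ?thesis
    by simp
qed

lemma chordless_cycle_if_disjoint_cycles:
  assumes all_cycles: "\<forall>c. simple_cycle V E c \<longrightarrow> (\<exists>j<k. \<exists>m. c = rotate m (cyc j))"
    and disjoint: "\<forall>i<k. \<forall>j<k. i \<noteq> j \<longrightarrow> set (cyc i) \<inter> set (cyc j) = {}"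
    and n: "n < k" "simple_cycle V E (cyc n)"
  shows "chordless_cycle V E (cyc n)"
  unfolding chordless_cycle_def
proof (intro conjI allI impI n(2))
  fix c'
  assume c': "simple_cycle V E c'" "set c' \<subseteq> set (cyc n)"
  then obtain j m where j: "j < k" "c' = rotate m (cyc j)"
    using all_cycles by blast
  from c'(1) j(2) have "set (cyc j) \<noteq> {}"
    by (simp add: simple_cycle_def)
  then obtain x where "x \<in> set (cyc j)"
    by (meson ex_in_conv)
  moreover from this c'(2) j(2) have "x \<in> set (cyc n)"
    by auto
  ultimately have "j = n"
    using disjoint j(1) n(1) by blast
  with j show "set c' = set (cyc n)"
    by simp
qed

section \<open>Reduced words over a chordless cycle\<close>

lemma reduced_proj_edge_alternates:
  assumes cyc: "chordless_cycle V E c" and irr: "irreflp E"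
    and red: "reduced E lt s" "set s \<subseteq> set c" and edge: "z \<in> set c" "y \<in> set c" "E z y"
  shows "successively (\<noteq>) (proj {z, y} s)"
proof (rule reduced_proj_alternates[OF red(1)])
  show "z \<noteq> y"
    using irr edge(3) by (auto simp: irreflp_def)
  show "\<forall>q\<in>set s. E z q \<longrightarrow> q = y" "\<forall>q\<in>set s. E q y \<longrightarrow> q = z"
    using chordless_cycle_out_neighbour_unique[OF cyc irr] chordless_cycle_in_neighbour_unique[OF cyc]
      edge red(2) by blast+
qed

lemma count_list_constant_on_chordless_cycle:
  assumes cyc: "chordless_cycle V E c" and irr: "irreflp E"
    and u: "set u \<subseteq> set c" and red: "reduced E lt (u @ u)" and x: "x \<in> set c"
  shows "count_list u x = count_list u (hd c)"
proof -
  have edge_eq: "count_list u z = count_list u y" if edge: "z \<in> set c" "y \<in> set c" "E z y" for z y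
  proof -
    have "successively (\<noteq>) (proj {z, y} u @ proj {z, y} u)"
      using reduced_proj_edge_alternates[OF cyc irr red _ edge] u by simp
    then have "count_list (proj {z, y} u) z = count_list (proj {z, y} u) y"
      by (rule count_list_alternating) auto
    then show ?thesis
      by (simp add: count_list_filter)
  qed
  have "successively E c"
    using cyc by (simp add: chordless_cycle_def simple_cycle_def)
  then have "successively (\<lambda>a b. count_list u a = count_list u b) c"
    by (rule successively_mono) (rule edge_eq)
  then show ?thesis
    using x by (rule successively_eq_imp_eq_hd)
qed

lemma reduced_eq_on_chordless_cycle:
  assumes cyc: "chordless_cycle V E c" and irr: "irreflp E" and tot: "totalp_on V lt"
    and sets: "set s \<subseteq> set c" "set s' \<subseteq> set c"
    and red: "reduced E lt (s @ s)" "reduced E lt (s @ s')"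
    and counts: "\<And>x. count_list s x = count_list s' x"
  shows "s = s'"
proof (rule reduced_eqI[OF _ _ tot])
  show "reduced E lt s" "reduced E lt s'"
    using red by (auto dest: reduced_appendD)
  show "set s \<subseteq> V" "set s' \<subseteq> V"
    using sets cyc by (auto simp: chordless_cycle_def simple_cycle_def)
  show "proj {z, y} s = proj {z, y} s'" if "z = y \<or> E z y" for z y
  proof (cases "z \<noteq> y \<and> z \<in> set c \<and> y \<in> set c")
    case True
    with that have edge: "z \<in> set c" "y \<in> set c" "E z y"
      by blast+
    have "successively (\<noteq>) (proj {z, y} s @ proj {z, y} s)"
      "successively (\<noteq>) (proj {z, y} s @ proj {z, y} s')"
      using reduced_proj_edge_alternates[OF cyc irr red(1) _ edge]
        reduced_proj_edge_alternates[OF cyc irr red(2) _ edge] sets by simp_all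
    moreover have "length (proj {z, y} s) = length (proj {z, y} s')"
      using length_proj_pair[of z y] True counts by presburger
    ultimately show ?thesis
      using alternating_append_eq[of "proj {z, y} s" "proj {z, y} s'" z y] by auto
  next
    case False
    then obtain t where "t \<in> {z, y}" "{z, y} \<inter> (set s \<union> set s') \<subseteq> {t}"
      using sets by blast
    with counts show ?thesis
      by (rule proj_eq_if_count_list_eq)
  qed
qed

lemma reduced_powers_commute:
  assumes cyc: "chordless_cycle V E c" and irr: "irreflp E" and tot: "totalp_on V lt"
    and u: "u \<noteq> []" "set u \<subseteq> set c" and w: "set w \<subseteq> set c"
    and red: "\<And>a b. reduced E lt (word_pow u a @ word_pow w b)"
  obtains p q where "0 < q" "word_pow w q = word_pow u p"
proof -
  have uu: "reduced E lt (u @ u)" and ww: "reduced E lt (w @ w)"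
    using red[of 2 0] red[of 0 2] by (simp_all add: numeral_2_eq_2)
  define Nu Nw where "Nu = count_list u (hd c)" and "Nw = count_list w (hd c)"
  have cu: "count_list u x = Nu" and cw: "count_list w x = Nw" if "x \<in> set c" for x
    using count_list_constant_on_chordless_cycle[OF cyc irr u(2) uu that]
      count_list_constant_on_chordless_cycle[OF cyc irr w ww that]
    by (simp_all add: Nu_def Nw_def)
  have "0 < Nu"
    using u cu[of "hd u"] by (metis count_list_0_iff gr0I hd_in_set subsetD)
  define s s' where "s = word_pow u Nw" and "s' = word_pow w Nu"
  have sets: "set s \<subseteq> set c" "set s' \<subseteq> set c"
    using u w set_word_pow unfolding s_def s'_def by fastforce+
  have "count_list s x = count_list s' x" for x
  proof (cases "x \<in> set c")
    case False
    with sets have "x \<notin> set s" "x \<notin> set s'"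
      by auto
    then show ?thesis
      by simp
  qed (simp add: s_def s'_def count_list_word_pow cu cw)
  moreover have "reduced E lt (s @ s)" "reduced E lt (s @ s')"
    using red[of "Nw + Nw" 0] red[of Nw Nu] by (simp_all add: s_def s'_def word_pow_add)
  ultimately have "s = s'"
    using reduced_eq_on_chordless_cycle[OF cyc irr tot sets] by blast
  then have "word_pow w Nu = word_pow u Nw"
    by (simp add: s_def s'_def)
  with \<open>0 < Nu\<close> show ?thesis
    by (rule that)
qed

section \<open>The vertex order\<close>

lemma admissible_order_totalp_on: "admissible_order V E k cyc lt \<Longrightarrow> totalp_on V lt"
  by (simp add: admissible_order_def totalp_on_def)

lemma admissible_order_above_cycle:
  assumes order: "admissible_order V E k cyc lt" and "n < k"
    and t: "t \<in> set (cyc n)" and s: "s \<in> set (cyc n)" and f: "f \<in> V - set (cyc n)"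
    and "lt t f"
  shows "lt s f"
proof (cases "f \<in> cycle_vertices k cyc")
  case True
  then obtain j where j: "j < k" "f \<in> set (cyc j)"
    by (auto simp: cycle_vertices_def)
  with f have "j \<noteq> n"
    by blast
  have nth: "\<forall>i<k. \<forall>j<k. \<forall>a<length (cyc i). \<forall>b<length (cyc j).
      lt (cyc i ! a) (cyc j ! b) \<longleftrightarrow> i < j \<or> i = j \<and> a < b"
    using order unfolding admissible_order_def by (elim conjE)
  from t s j(2) obtain a b i where
    "a < length (cyc n)" "cyc n ! a = t" "b < length (cyc n)" "cyc n ! b = s"
    "i < length (cyc j)" "cyc j ! i = f"
    by (meson in_set_conv_nth)
  with nth \<open>n < k\<close> j(1) \<open>j \<noteq> n\<close> \<open>lt t f\<close> show ?thesis
    by auto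
next
  case False
  moreover have "s \<in> cycle_vertices k cyc"
    using s \<open>n < k\<close> by (auto simp: cycle_vertices_def)
  moreover have "\<forall>x \<in> cycle_vertices k cyc. \<forall>y \<in> V - cycle_vertices k cyc. lt x y"
    using order unfolding admissible_order_def by (elim conjE)
  ultimately show ?thesis
    using f by blast
qed

lemma separated_middle_not_reduced:
  assumes order: "admissible_order V E k cyc lt" and n: "n < k" "simple_cycle V E (cyc n)"
    and u: "u \<noteq> []" "set u \<subseteq> set (cyc n)" and w: "w \<noteq> []" "set w \<subseteq> set (cyc n)"
    and v: "v \<noteq> []" "set v \<subseteq> V"
    and sep: "\<forall>x\<in>set v. \<forall>y\<in>set (cyc n). \<not> E x y \<and> \<not> E y x"
  shows "\<not> reduced E lt (u @ v @ w)"
proof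
  assume red: "reduced E lt (u @ v @ w)"
  have disj: "x \<notin> set (cyc n)" if "x \<in> set v" for x
    using sep that simple_cycle_out_neighbour[OF n(2), of x] by blast
  obtain f v' where v': "v = f # v'"
    using v(1) by (cases v) auto
  define t s where "t = last u" and "s = hd w"
  have t: "t \<in> set (cyc n)" and s: "s \<in> set (cyc n)"
    using u w last_in_set hd_in_set unfolding t_def s_def by blast+
  have f: "f \<in> V - set (cyc n)"
    using v v' disj by simp
  have "\<not> lt f t"
  proof (rule reduced_not_less[of E lt "butlast u" t "[]" f "v' @ w"])
    have "u = butlast u @ [t]"
      using u(1) by (simp add: t_def)
    then have "u @ v @ w = butlast u @ t # [] @ f # v' @ w"
      using v' by simp
    with red show "reduced E lt (butlast u @ t # [] @ f # v' @ w)"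
      by (simp only:)
    show "f \<notin> set [t]" "\<forall>x\<in>set [t]. \<not> E x f \<and> \<not> E f x"
      using sep v' t f by auto
  qed
  moreover have "t \<in> V"
    using t n(2) by (auto simp: simple_cycle_def)
  ultimately have "lt t f"
    using f t totalp_onD[OF admissible_order_totalp_on[OF order], of t f] by blast
  then have "lt s f"
    using admissible_order_above_cycle[OF order n(1) t s f] by blast
  moreover have "\<not> lt s f"
  proof (rule reduced_not_less[of E lt u f v' s "tl w"])
    have "w = s # tl w"
      using w(1) by (simp add: s_def)
    then have "u @ v @ w = u @ f # v' @ s # tl w"
      using v' by simp
    with red show "reduced E lt (u @ f # v' @ s # tl w)"
      by (simp only:)
    show "s \<notin> set (f # v')" "\<forall>x\<in>set (f # v'). \<not> E x s \<and> \<not> E s x"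
      using sep v' s disj by auto
  qed
  ultimately show False
    by simp
qed

lemma reduced_double_star_degenerate:
  assumes order: "admissible_order V E k cyc lt" and n: "n < k" and cyc: "chordless_cycle V E (cyc n)"
    and irr: "irreflp E" and u: "set u \<subseteq> set (cyc n)" and w: "set w \<subseteq> set (cyc n)"
    and v: "set v \<subseteq> V" and sep: "\<forall>x\<in>set v. \<forall>y\<in>set (cyc n). \<not> E x y \<and> \<not> E y x"
    and red: "\<And>a b. reduced E lt (word_pow u a @ v @ word_pow w b)"
  shows "u = [] \<or> w = [] \<or> v = [] \<and> (\<exists>p q. 0 < q \<and> word_pow w q = word_pow u p)"
proof (cases "u = [] \<or> w = []")
  case False
  have cycle: "simple_cycle V E (cyc n)"
    using cyc by (simp add: chordless_cycle_def)
  have "v = []"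
  proof (rule ccontr)
    assume "v \<noteq> []"
    with False have "\<not> reduced E lt (u @ v @ w)"
      using separated_middle_not_reduced[OF order n cycle _ u _ w _ v sep] by blast
    moreover have "reduced E lt (u @ v @ w)"
      using red[of 1 1] by simp
    ultimately show False
      by contradiction
  qed
  moreover obtain p q where "0 < q" "word_pow w q = word_pow u p"
  proof (rule reduced_powers_commute[OF cyc irr admissible_order_totalp_on[OF order] _ u w])
    show "u \<noteq> []"
      using False by simp
    show "reduced E lt (word_pow u a @ word_pow w b)" for a b
      using red[of a b] \<open>v = []\<close> by simp
  qed
  ultimately show ?thesis
    by blast
qed blast

theorem lemma3p3:
  fixes V :: "'v set" and E :: "'v \<Rightarrow> 'v \<Rightarrow> bool" and k :: nat and cyc :: "nat \<Rightarrow> 'v list"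
    and lt :: "'v \<Rightarrow> 'v \<Rightarrow> bool" and u v w :: "'v list" and n :: nat
  assumes graph: "oriented_simple_graph V E"
    and k_pos: "k \<ge> 1"
    and cycles: "\<forall>j<k. simple_cycle V E (cyc j)"
    and all_cycles: "\<forall>c. simple_cycle V E c \<longrightarrow> (\<exists>j<k. \<exists>m. c = rotate m (cyc j))"
    and different: "\<forall>i<k. \<forall>j<k. i \<noteq> j \<longrightarrow> (\<forall>m. cyc i \<noteq> rotate m (cyc j))"
    and not_connected: "\<forall>i<k. \<forall>j<k. i \<noteq> j \<longrightarrow> \<not> (\<exists>x\<in>set (cyc i). \<exists>y\<in>set (cyc j). E\<^sup>*\<^sup>* x y)"
    and order: "admissible_order V E k cyc lt"
    and words: "set u \<subseteq> V" "set v \<subseteq> V" "set w \<subseteq> V"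
    and n: "n < k" "set u \<subseteq> set (cyc n)" "set w \<subseteq> set (cyc n)"
    and red: "\<forall>a b. reduced E lt (word_pow u a @ v @ word_pow w b)"
  shows "(\<exists>x\<in>set v. \<exists>c\<in>set (cyc n). E x c \<or> E c x) \<or>
         (\<exists>S P. finite S \<and> finite P \<and>
            (\<forall>(p, r, q) \<in> S. set p \<subseteq> V \<and> set r \<subseteq> V \<and> set q \<subseteq> V) \<and>
            (\<forall>p \<in> P. set p \<subseteq> V) \<and>
            {word_pow u a @ v @ word_pow w b | a b. True} =
              (\<Union>(p, r, q) \<in> S. {p @ word_pow r c @ q | c. True}) \<union> P)"
proof (cases "\<exists>x\<in>set v. \<exists>c\<in>set (cyc n). E x c \<or> E c x")
  case False
  have "\<forall>i<k. \<forall>j<k. i \<noteq> j \<longrightarrow> set (cyc i) \<inter> set (cyc j) = {}"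
    using not_connected by (meson disjoint_iff rtranclp.rtrancl_refl)
  then have chordless: "chordless_cycle V E (cyc n)"
    using chordless_cycle_if_disjoint_cycles[OF all_cycles _ n(1)] cycles n(1) by blast
  have "irreflp E"
    using graph by (simp add: oriented_simple_graph_def irreflp_def)
  with False red have degenerate: "u = [] \<or> w = [] \<or> v = [] \<and> (\<exists>p q. 0 < q \<and> word_pow w q = word_pow u p)"
    using reduced_double_star_degenerate[OF order n(1) chordless _ n(2) n(3) words(2)] by blast
  obtain S where S: "finite S" "\<forall>(p, r, q) \<in> S. set p \<union> set r \<union> set q \<subseteq> set u \<union> set v \<union> set w"
    "{word_pow u a @ v @ word_pow w b | a b. True} = (\<Union>(p, r, q) \<in> S. {p @ word_pow r c @ q | c. True})"
    using double_star_finite_union[OF degenerate] by (elim exE conjE)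
  moreover have "\<forall>(p, r, q) \<in> S. set p \<subseteq> V \<and> set r \<subseteq> V \<and> set q \<subseteq> V"
    using S(2) words by fast
  ultimately show ?thesis
    by (intro disjI2 exI[of _ S] exI[of _ "{}"]) simp
qed simp

end
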